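(* Let $\gamma:=2\Delta\lambda\max\{\lambda,\mu\}$. Then for all $\mathbf x\in\mathbb R^p$, $\mathbf b\in\mathbb R^V$, $\mathbf w\in\mathbb R^E$ and all nodes $v\in V$ of depth $t$, $$|f_{\mathfrak A,v}(\mathbf x,\mathbf w,\mathbf b)|\le\gamma^t(\|\mathbf w\|_\infty+1)^t(\|\mathbf x\|_\infty+\|\mathbf b\|_\infty+1).$$
   Context: $\mathfrak A=(V,E,(\mathfrak a_v)_{v\in V})$ is an FNN architecture: $(V,E)$ is a finite dag and each $\mathfrak a_v:\mathbb R\to\mathbb R$ is Lipschitz continuous. The sources are the input nodes $X_1,\dots,X_p$, the sinks the output nodes $Y_1,\dots,Y_q$. For $\mathbf x\in\mathbb R^p$, $\mathbf w=(w_e)_{e\in E}$, $\mathbf b=(b_v)_{v\in V}$: $f_{\mathfrak A,X_i}(\mathbf x,\mathbf w,\mathbf b)=x_i$ and, for non-input $v$, $f_{\mathfrak A,v}(\mathbf x,\mathbf w,\mathbf b)=\mathfrak a_v\big(b_v+\sum_{u:uv\in E}f_{\mathfrak A,u}(\mathbf x,\mathbf w,\mathbf b)\,w_{uv}\big)$; $\mathfrak A(\mathbf x,\mathbf w,\mathbf b)=(f_{\mathfrak A,Y_1},\dots,f_{\mathfrak A,Y_q})(\mathbf x,\mathbf w,\mathbf b)$. The depth of a node is the length of the longest path from a source to it; $d$ is the depth of the dag (maximum depth of a sink); $\Delta$ is the maximum in-degree, and it is assumed that $\Delta\ge1$. $\lambda\in\mathbb N_{>0}$ is a Lipschitz constant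 of every $\mathfrak a_v$, and $\mu:=\max_{v\in V}\lceil|\mathfrak a_v(0)|\rceil$. Norms are $\ell_\infty$. *)

theory Defs
  imports "HOL-Analysis.Analysis"
begin

text \<open>An FNN architecture on a finite dag (V, E). Edges are pairs (u,v) meaning u -> v.
  Input nodes X_0,...,X_{p-1} are the sources of the dag (bijective enumeration X).\<close>

definition sources :: "'v set \<Rightarrow> ('v \<times> 'v) set \<Rightarrow> 'v set" where
  "sources V E = {v \<in> V. \<forall>u. (u, v) \<notin> E}"

definition fnn_dag :: "'v set \<Rightarrow> ('v \<times> 'v) set \<Rightarrow> bool" where
  "fnn_dag V E \<longleftrightarrow> finite V \<and> E \<subseteq> V \<times> V \<and> acyclic E"

definition depth :: "'v set \<Rightarrow> ('v \<times> 'v) set \<Rightarrow> 'v \<Rightarrow> nat" where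
  "depth V E v = Max {n. \<exists>u \<in> sources V E. (u, v) \<in> E ^^ n}"

definition max_indeg :: "'v set \<Rightarrow> ('v \<times> 'v) set \<Rightarrow> nat" where
  "max_indeg V E = Max ((\<lambda>v. card {u. (u, v) \<in> E}) ` V)"

definition sup_norm :: "'i set \<Rightarrow> ('i \<Rightarrow> real) \<Rightarrow> real" where
  "sup_norm I z = Max (insert 0 ((\<lambda>i. \<bar>z i\<bar>) ` I))"

text \<open>F is the family of node functions f_{A,v}(x,w,b), v \<in> V: it satisfies the defining
  recursion (which determines it uniquely on V since (V,E) is a finite dag).\<close>
definition node_funs ::
  "'v set \<Rightarrow> ('v \<times> 'v) set \<Rightarrow> ('v \<Rightarrow> real \<Rightarrow> real) \<Rightarrow> (nat \<Rightarrow> 'v) \<Rightarrow> nat \<Rightarrow>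
   (nat \<Rightarrow> real) \<Rightarrow> ('v \<times> 'v \<Rightarrow> real) \<Rightarrow> ('v \<Rightarrow> real) \<Rightarrow> ('v \<Rightarrow> real) \<Rightarrow> bool" where
  "node_funs V E a X p x w b F \<longleftrightarrow>
     (\<forall>i<p. F (X i) = x i) \<and>
     (\<forall>v \<in> V - sources V E. F v = a v (b v + (\<Sum>u \<in> {u. (u, v) \<in> E}. F u * w (u, v))))"

end

theory Submission
  imports Defs
begin

(* By the node recursion and |a_v z| <= |a_v 0| + lam |z|, a non-input
   node is bounded by mu + lam (|b| + Delta C |w|) whenever C bounds all its parents, which have
   strictly smaller depth. Hence every monotone C with |x| <= C 0 and
   mu + lam (|b| + Delta C(s) |w|) <= C(s+1) bounds each node v by C(depth v), and
   C(s) = (gamma (|w| + 1))^s (|x| + |b| + 1) is such a majorant. *)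

lemma fnn_dag_finite_edges: "fnn_dag V E \<Longrightarrow> finite E"
  unfolding fnn_dag_def using finite_subset finite_cartesian_product by blast

lemma fnn_dag_wf: "fnn_dag V E \<Longrightarrow> wf E"
  using finite_acyclic_wf fnn_dag_finite_edges unfolding fnn_dag_def by blast

lemma finite_relpow_lengths:
  assumes "finite E" "wf E"
  shows "finite {n. \<exists>u. (u, v) \<in> E ^^ n}"
  using assms(2)
proof (induction v rule: wf_induct_rule)
  case (less v)
  let ?lengths = "\<lambda>v. {n. \<exists>u. (u, v) \<in> E ^^ n}"
  have "?lengths v \<subseteq> insert 0 (Suc ` (\<Union>y \<in> {y. (y, v) \<in> E}. ?lengths y))"
  proof
    fix n assume "n \<in> ?lengths v"
    then obtain u where "(u, v) \<in> E ^^ n" by blast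
    then show "n \<in> insert 0 (Suc ` (\<Union>y \<in> {y. (y, v) \<in> E}. ?lengths y))"
      by (cases n) (auto elim: relpow_Suc_E)
  qed
  moreover have "{y. (y, v) \<in> E} \<subseteq> fst ` E"
    by force
  then have "finite {y. (y, v) \<in> E}"
    using finite_subset finite_imageI[OF assms(1)] by blast
  then have "finite (\<Union>y \<in> {y. (y, v) \<in> E}. ?lengths y)"
    using less.IH by simp
  ultimately show ?case
    using finite_subset by blast
qed

lemma fnn_dag_reachable_from_source:
  assumes "fnn_dag V E" "v \<in> V"
  shows "\<exists>s \<in> sources V E. (s, v) \<in> E\<^sup>*"
  using fnn_dag_wf[OF assms(1)] assms(2)
proof (induction v rule: wf_induct_rule)
  case (less v)
  show ?case
  proof (cases "v \<in> sources V E")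
    case False
    then obtain u where u: "(u, v) \<in> E"
      using less.prems unfolding sources_def by auto
    then have "u \<in> V" using assms(1) unfolding fnn_dag_def by auto
    then show ?thesis
      using less.IH[OF u] u by (meson rtrancl.rtrancl_into_rtrancl)
  qed auto
qed

lemma depth_less:
  assumes dag: "fnn_dag V E" and edge: "(u, v) \<in> E"
  shows "depth V E u < depth V E v"
proof -
  let ?lengths = "\<lambda>v. {n. \<exists>s \<in> sources V E. (s, v) \<in> E ^^ n}"
  have fin: "finite (?lengths v)" for v
    using finite_relpow_lengths[OF fnn_dag_finite_edges[OF dag] fnn_dag_wf[OF dag]]
    by (rule finite_subset[rotated]) blast
  have "u \<in> V" using dag edge unfolding fnn_dag_def by auto
  then have "?lengths u \<noteq> {}"
    using fnn_dag_reachable_from_source[OF dag] by (blast dest: rtrancl_imp_relpow)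
  then have "depth V E u \<in> ?lengths u"
    unfolding depth_def using Max_in[OF fin] by blast
  then have "Suc (depth V E u) \<in> ?lengths v"
    using edge by auto
  then have "Suc (depth V E u) \<le> Max (?lengths v)"
    by (rule Max_ge[OF fin])
  then show ?thesis
    unfolding depth_def by simp
qed

lemma sup_norm_nonneg: "finite I \<Longrightarrow> 0 \<le> sup_norm I z"
  unfolding sup_norm_def by simp

lemma abs_le_sup_norm: "finite I \<Longrightarrow> i \<in> I \<Longrightarrow> \<bar>z i\<bar> \<le> sup_norm I z"
  unfolding sup_norm_def by simp

lemma lipschitz_on_abs_le:
  fixes f :: "real \<Rightarrow> real"
  assumes "L-lipschitz_on UNIV f"
  shows "\<bar>f z\<bar> \<le> \<bar>f 0\<bar> + L * \<bar>z\<bar>"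
  using lipschitz_onD[OF assms, of z 0] by (simp add: dist_real_def)

lemma majorant_step_le:
  fixes D l m M B W c :: real
  assumes D: "1 \<le> D" and l: "1 \<le> l" and m: "m \<le> M" and lM: "l \<le> M"
    and B: "0 \<le> B" and W: "0 \<le> W" and c: "B + 1 \<le> c"
  shows "m + l * (B + D * c * W) \<le> 2 * D * l * M * (W + 1) * c"
proof -
  have M: "1 \<le> M" using l lM by linarith
  have DM: "1 \<le> D * M"
    using D M mult_mono[of 1 D 1 M] by simp
  have Dlc: "1 \<le> D * l * c"
    using D l c B mult_mono[of 1 D 1 l] mult_mono[of 1 "D * l" 1 c] by simp
  have "m \<le> M * 1" using m by simp
  also have "\<dots> \<le> M * (D * l * c)" using M Dlc by (intro mult_left_mono) simp_all
  finally have m_le: "m \<le> M * (D * l * c)" .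
  have "l * B \<le> l * c" using l c by (intro mult_left_mono) simp_all
  also have "\<dots> \<le> (D * M) * (l * c)" using mult_right_mono[OF DM, of "l * c"] l c B by simp
  finally have lB_le: "l * B \<le> (D * M) * (l * c)" .
  have "0 \<le> l * (D * c * W)" using l D c B W by simp
  then have "l * (D * c * W) \<le> (2 * M) * (l * (D * c * W))"
    using mult_right_mono[of 1 "2 * M"] M by fastforce
  with m_le lB_le show ?thesis
    by (simp add: algebra_simps)
qed

lemma geometric_majorant:
  fixes D l m M B W R :: real
  assumes D: "1 \<le> D" and l: "1 \<le> l" and m: "m \<le> M" and lM: "l \<le> M"
    and B: "0 \<le> B" and W: "0 \<le> W" and R: "B + 1 \<le> R"
  defines "g \<equiv> 2 * D * l * M * (W + 1)"
  shows "mono (\<lambda>s. g ^ s * R)"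
    and "m + l * (B + D * (g ^ s * R) * W) \<le> g ^ Suc s * R"
proof -
  have "1 \<le> D * l * M"
    using D l lM mult_mono[of 1 D 1 l] mult_mono[of 1 "D * l" 1 M] by simp
  then have "1 \<le> 2 * D * l * M"
    by (simp add: mult.assoc)
  then have "1 * 1 \<le> 2 * D * l * M * (W + 1)"
    using D l lM W by (intro mult_mono) auto
  then have "1 \<le> g"
    unfolding g_def by simp
  then show mono: "mono (\<lambda>s. g ^ s * R)"
    using B R by (intro monoI mult_right_mono power_increasing) auto
  have "B + 1 \<le> g ^ s * R"
    using monoD[OF mono, of 0 s] R by simp
  then have "m + l * (B + D * (g ^ s * R) * W) \<le> g * (g ^ s * R)"
    unfolding g_def by (rule majorant_step_le[OF D l m lM B W])
  then show "m + l * (B + D * (g ^ s * R) * W) \<le> g ^ Suc s * R"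
    by (simp add: mult.assoc)
qed

lemma node_funs_abs_le_majorant:
  fixes C :: "nat \<Rightarrow> real" and L \<mu> :: real
  assumes dag: "fnn_dag V E"
    and inputs: "sources V E \<subseteq> X ` {..<p}"
    and lip: "\<forall>u \<in> V. L-lipschitz_on UNIV (a u)"
    and a0: "\<forall>u \<in> V. \<bar>a u 0\<bar> \<le> \<mu>"
    and F: "node_funs V E a X p x w b F"
    and mono: "mono C"
    and base: "sup_norm {..<p} x \<le> C 0"
    and step: "\<And>s. \<mu> + L * (sup_norm V b + real (max_indeg V E) * C s * sup_norm E w) \<le> C (Suc s)"
    and v: "v \<in> V"
  shows "\<bar>F v\<bar> \<le> C (depth V E v)"
  using fnn_dag_wf[OF dag] v
proof (induction v rule: wf_induct_rule)
  case (less v)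
  have finV: "finite V" and EV: "E \<subseteq> V \<times> V"
    using dag unfolding fnn_dag_def by auto
  have finE: "finite E" using fnn_dag_finite_edges[OF dag] .
  have C_nonneg: "0 \<le> C s" for s
    using sup_norm_nonneg[of "{..<p}" x] base monoD[OF mono, of 0 s] by simp
  show ?case
  proof (cases "v \<in> sources V E")
    case True
    then obtain i where "i < p" "v = X i" using inputs by auto
    then have "\<bar>F v\<bar> \<le> sup_norm {..<p} x"
      using F abs_le_sup_norm[of "{..<p}" i x] unfolding node_funs_def by simp
    then show ?thesis
      using base monoD[OF mono, of 0 "depth V E v"] by simp
  next
    case False
    define P where "P = {u. (u, v) \<in> E}"
    define s where "s = depth V E v - 1"
    obtain u0 where "u0 \<in> P" using False less.prems unfolding sources_def P_def by auto
    then have depth_v: "depth V E v = Suc s"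
      using depth_less[OF dag] unfolding s_def P_def by fastforce
    have F_parent: "\<bar>F u\<bar> \<le> C s" if "u \<in> P" for u
    proof -
      have "(u, v) \<in> E" "u \<in> V" using that EV unfolding P_def by auto
      then show ?thesis
        using less.IH depth_less[OF dag] depth_v monoD[OF mono, of "depth V E u" s]
        by fastforce
    qed
    have card_P: "real (card P) \<le> real (max_indeg V E)"
      unfolding max_indeg_def P_def using finV less.prems by simp
    have "\<bar>\<Sum>u \<in> P. F u * w (u, v)\<bar> \<le> (\<Sum>u \<in> P. \<bar>F u\<bar> * \<bar>w (u, v)\<bar>)"
      by (simp add: sum_abs[THEN order_trans] abs_mult)
    also have "\<dots> \<le> real (card P) * (C s * sup_norm E w)"
      using F_parent abs_le_sup_norm[OF finE] C_nonneg unfolding P_def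
      by (intro sum_bounded_above mult_mono) auto
    also have "\<dots> \<le> real (max_indeg V E) * C s * sup_norm E w"
      using card_P C_nonneg sup_norm_nonneg[OF finE]
      by (simp add: mult.assoc mult_right_mono)
    finally have sum_le: "\<bar>\<Sum>u \<in> P. F u * w (u, v)\<bar> \<le> real (max_indeg V E) * C s * sup_norm E w" .
    have "\<bar>F v\<bar> = \<bar>a v (b v + (\<Sum>u \<in> P. F u * w (u, v)))\<bar>"
      using F False less.prems unfolding node_funs_def P_def by simp
    also have "\<dots> \<le> \<bar>a v 0\<bar> + L * \<bar>b v + (\<Sum>u \<in> P. F u * w (u, v))\<bar>"
      using lip less.prems lipschitz_on_abs_le by blast
    also have "\<dots> \<le> \<mu> + L * (sup_norm V b + real (max_indeg V E) * C s * sup_norm E w)"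
    proof (intro add_mono mult_left_mono)
      show "\<bar>b v + (\<Sum>u \<in> P. F u * w (u, v))\<bar> \<le> sup_norm V b + real (max_indeg V E) * C s * sup_norm E w"
        using abs_le_sup_norm[OF finV less.prems, of b] sum_le by linarith
      show "0 \<le> L"
        using lip less.prems lipschitz_on_nonneg by blast
    qed (use a0 less.prems in auto)
    also have "\<dots> \<le> C (depth V E v)"
      using step depth_v by simp
    finally show ?thesis .
  qed
qed

theorem lemma6p5:
  fixes V :: "'v set" and E :: "('v \<times> 'v) set" and a :: "'v \<Rightarrow> real \<Rightarrow> real"
    and X :: "nat \<Rightarrow> 'v" and p :: nat and lam :: nat
    and x :: "nat \<Rightarrow> real" and w :: "'v \<times> 'v \<Rightarrow> real" and b :: "'v \<Rightarrow> real"
    and F :: "'v \<Rightarrow> real" and v :: 'v and t :: nat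
  assumes dag: "fnn_dag V E"
    and inputs: "bij_betw X {..<p} (sources V E)"
    and lam_pos: "lam > 0"
    and lip: "\<forall>u \<in> V. (real lam)-lipschitz_on UNIV (a u)"
    and Delta: "max_indeg V E \<ge> 1"
    and F: "node_funs V E a X p x w b F"
    and v: "v \<in> V"
    and t: "depth V E v = t"
  shows "let \<mu> = Max ((\<lambda>u. nat \<lceil>\<bar>a u 0\<bar>\<rceil>) ` V);
             \<gamma> = 2 * real (max_indeg V E) * real lam * real (max lam \<mu>)
         in \<bar>F v\<bar> \<le> \<gamma> ^ t * (sup_norm E w + 1) ^ t * (sup_norm {..<p} x + sup_norm V b + 1)"
proof -
  define \<mu> where "\<mu> = Max ((\<lambda>u. nat \<lceil>\<bar>a u 0\<bar>\<rceil>) ` V)"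
  have finV: "finite V" using dag unfolding fnn_dag_def by simp
  have a0: "\<forall>u \<in> V. \<bar>a u 0\<bar> \<le> real \<mu>"
  proof
    fix u assume "u \<in> V"
    then have "nat \<lceil>\<bar>a u 0\<bar>\<rceil> \<le> \<mu>" unfolding \<mu>_def using finV by (intro Max_ge) auto
    then show "\<bar>a u 0\<bar> \<le> real \<mu>" by linarith
  qed
  note majorant = geometric_majorant[of "real (max_indeg V E)" "real lam" "real \<mu>" "real (max lam \<mu>)"
      "sup_norm V b" "sup_norm E w" "sup_norm {..<p} x + sup_norm V b + 1"]
  have "\<bar>F v\<bar> \<le> (2 * real (max_indeg V E) * real lam * real (max lam \<mu>) * (sup_norm E w + 1)) ^ t
      * (sup_norm {..<p} x + sup_norm V b + 1)"
    unfolding t[symmetric]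
  proof (rule node_funs_abs_le_majorant[OF dag _ lip a0 F majorant(1) _ majorant(2) v])
    show "sources V E \<subseteq> X ` {..<p}"
      using bij_betw_imp_surj_on[OF inputs] by simp
  qed (use Delta lam_pos sup_norm_nonneg[OF finV, of b] sup_norm_nonneg[of "{..<p}" x]
      sup_norm_nonneg[OF fnn_dag_finite_edges[OF dag], of w] in auto)
  then show ?thesis
    unfolding Let_def \<mu>_def by (simp add: power_mult_distrib)
qed

end
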